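(* Let $N$ be a finite set with $|N|\ge 2$. There is a one-to-one correspondence between SE faces of $P_N$ and faces of $C_N$ which preserves inclusion: for SE faces $F_1,F_2$ of $P_N$ with corresponding faces $\bar F_1,\bar F_2$ of $C_N$, $F_1\subseteq F_2$ iff $\bar F_1\subseteq\bar F_2$. Specifically, the SE face of $P_N$ given by a valid inequality $\langle o,\eta\rangle\le u$ with SE objective $o$ corresponds to the face of $C_N$ given by the (valid) inequality $\langle\tau_o,c\rangle\le u$, and the sets of graphs identified with corresponding faces coincide: $\{G\in\mathrm{DAG}(N):\eta_G\in F\}=\{G\in\mathrm{DAG}(N):c_G\in\bar F\}$.
   Context: $\mathrm{DAG}(N)$ is the set of acyclic directed graphs over $N$; $\mathrm{pa}_G(a)$ is the parent set of $a$ in $G$; $G\sim H$ (Markov equivalence) means same adjacencies and same immoralities (induced $a\to c\leftarrow b$, $a,b$ non-adjacent). $\Upsilon=\{(a|B): a\in N,\ \emptyset\neq B\subseteq N\setminus\{a\}\}$; $\eta_G\in\mathbb{R}^{\Upsilon}$ has $\eta_G(a|B)=1$ if $B=\mathrm{pa}_G(a)$, else $0$; $P_N=\mathrm{conv}\{\eta_G:G\in\mathrm{DAG}(N)\}$. $\mathcal{S}=\{S\subseteq N:|S|\ge2\}$; $c_\eta(S)=\sum_{a\in S}\sum_{B:\,S\setminus\{a\}\subseteq B\subseteq N\setminus\{a\}}\eta(a|B)$; $c_G=c_{\eta_G}$; $C_N=\mathrm{conv}\{c_G:G\in\mathrm{DAG}(N)\}$ is the characteristic-imset polytope. $o$ is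 an SE objective if $\langle o,\eta_G\rangle=\langle o,\eta_H\rangle$ whenever $G\sim H$; a face $F$ of $P_N$ is SE if $F=\{v\in P_N:\langle o,v\rangle=u\}$ for some SE objective $o$ and $u$ with $\langle o,v\rangle\le u$ on $P_N$. For an SE objective $o$, $\tau_o\in\mathbb{R}^{\mathcal{S}}$ is $\tau_o(T)=\sum_{\emptyset\neq K\subseteq T\setminus\{b\}}(-1)^{|T\setminus\{b\}|-|K|}o(b|K)$ for any $b\in T$ (independent of $b$), with $o(b|\emptyset)=0$. *)

theory Defs
  imports "HOL-Analysis.Analysis"
begin

definition DAGs :: "'a set \<Rightarrow> ('a \<times> 'a) set set" where
  "DAGs N = {G. G \<subseteq> N \<times> N \<and> acyclic G}"

definition pa :: "('a \<times> 'a) set \<Rightarrow> 'a \<Rightarrow> 'a set" where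
  "pa G a = {b. (b, a) \<in> G}"

definition adj :: "('a \<times> 'a) set \<Rightarrow> 'a \<Rightarrow> 'a \<Rightarrow> bool" where
  "adj G a b \<longleftrightarrow> (a, b) \<in> G \<or> (b, a) \<in> G"

definition immorality :: "('a \<times> 'a) set \<Rightarrow> 'a \<Rightarrow> 'a \<Rightarrow> 'a \<Rightarrow> bool" where
  "immorality G a c b \<longleftrightarrow> (a, c) \<in> G \<and> (b, c) \<in> G \<and> a \<noteq> b \<and> \<not> adj G a b"

definition markov_equiv :: "('a \<times> 'a) set \<Rightarrow> ('a \<times> 'a) set \<Rightarrow> bool" where
  "markov_equiv G H \<longleftrightarrow>
     (\<forall>a b. adj G a b = adj H a b) \<and> (\<forall>a c b. immorality G a c b = immorality H a c b)"

definition Ups :: "'a set \<Rightarrow> ('a \<times> 'a set) set" where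
  "Ups N = {(a, B). a \<in> N \<and> B \<noteq> {} \<and> B \<subseteq> N - {a}}"

text \<open>Vectors in R^Upsilon are functions ('a \<times> 'a set) \<Rightarrow> real; only coordinates in Ups N matter.\<close>
definition eta :: "'a set \<Rightarrow> ('a \<times> 'a) set \<Rightarrow> ('a \<times> 'a set) \<Rightarrow> real" where
  "eta N G = (\<lambda>(a, B). if (a, B) \<in> Ups N \<and> B = pa G a then 1 else 0)"

definition ipU :: "'a set \<Rightarrow> ('a \<times> 'a set \<Rightarrow> real) \<Rightarrow> ('a \<times> 'a set \<Rightarrow> real) \<Rightarrow> real" where
  "ipU N ob v = (\<Sum>i\<in>Ups N. ob i * v i)"

definition conv :: "('i \<Rightarrow> real) set \<Rightarrow> ('i \<Rightarrow> real) set" where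
  "conv V = {x. \<exists>w. (\<forall>v\<in>V. w v \<ge> 0) \<and> (\<Sum>v\<in>V. w v) = 1 \<and> x = (\<lambda>i. \<Sum>v\<in>V. w v * v i)}"

definition P_poly :: "'a set \<Rightarrow> ('a \<times> 'a set \<Rightarrow> real) set" where
  "P_poly N = conv (eta N ` DAGs N)"

definition Ssets :: "'a set \<Rightarrow> 'a set set" where
  "Ssets N = {S. S \<subseteq> N \<and> card S \<ge> 2}"

definition c_eta :: "'a set \<Rightarrow> ('a \<times> 'a set \<Rightarrow> real) \<Rightarrow> 'a set \<Rightarrow> real" where
  "c_eta N v = (\<lambda>S. if S \<in> Ssets N then
      (\<Sum>a\<in>S. \<Sum>B\<in>{B. S - {a} \<subseteq> B \<and> B \<subseteq> N - {a}}. v (a, B)) else 0)"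

definition cG :: "'a set \<Rightarrow> ('a \<times> 'a) set \<Rightarrow> 'a set \<Rightarrow> real" where
  "cG N G = c_eta N (eta N G)"

definition C_poly :: "'a set \<Rightarrow> ('a set \<Rightarrow> real) set" where
  "C_poly N = conv (cG N ` DAGs N)"

definition ipS :: "'a set \<Rightarrow> ('a set \<Rightarrow> real) \<Rightarrow> ('a set \<Rightarrow> real) \<Rightarrow> real" where
  "ipS N t c = (\<Sum>S\<in>Ssets N. t S * c S)"

definition SE_objective :: "'a set \<Rightarrow> ('a \<times> 'a set \<Rightarrow> real) \<Rightarrow> bool" where
  "SE_objective N ob \<longleftrightarrow> (\<forall>G\<in>DAGs N. \<forall>H\<in>DAGs N.
      markov_equiv G H \<longrightarrow> ipU N ob (eta N G) = ipU N ob (eta N H))"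

definition valid_P :: "'a set \<Rightarrow> ('a \<times> 'a set \<Rightarrow> real) \<Rightarrow> real \<Rightarrow> bool" where
  "valid_P N ob u \<longleftrightarrow> (\<forall>v\<in>P_poly N. ipU N ob v \<le> u)"

definition face_P :: "'a set \<Rightarrow> ('a \<times> 'a set \<Rightarrow> real) \<Rightarrow> real \<Rightarrow> ('a \<times> 'a set \<Rightarrow> real) set" where
  "face_P N ob u = {v\<in>P_poly N. ipU N ob v = u}"

definition SE_face :: "'a set \<Rightarrow> ('a \<times> 'a set \<Rightarrow> real) set \<Rightarrow> bool" where
  "SE_face N F \<longleftrightarrow> (\<exists>ob u. SE_objective N ob \<and> valid_P N ob u \<and> F = face_P N ob u)"

definition valid_C :: "'a set \<Rightarrow> ('a set \<Rightarrow> real) \<Rightarrow> real \<Rightarrow> bool" where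
  "valid_C N t u \<longleftrightarrow> (\<forall>c\<in>C_poly N. ipS N t c \<le> u)"

definition face_C :: "'a set \<Rightarrow> ('a set \<Rightarrow> real) \<Rightarrow> real \<Rightarrow> ('a set \<Rightarrow> real) set" where
  "face_C N t u = {c\<in>C_poly N. ipS N t c = u}"

text \<open>Faces of C_N: sets cut out by valid linear inequalities (includes the empty face and C_N).\<close>
definition is_face_C :: "'a set \<Rightarrow> ('a set \<Rightarrow> real) set \<Rightarrow> bool" where
  "is_face_C N F \<longleftrightarrow> (\<exists>t u. valid_C N t u \<and> F = face_C N t u)"

text \<open>tau_o(T), computed with an arbitrarily chosen b in T (independent of b for SE objectives).\<close>
definition tau :: "('a \<times> 'a set \<Rightarrow> real) \<Rightarrow> 'a set \<Rightarrow> real" where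
  "tau ob T = (let b = (SOME b. b \<in> T) in
      (\<Sum>K\<in>{K. K \<noteq> {} \<and> K \<subseteq> T - {b}}. (-1::real) ^ (card (T - {b}) - card K) * ob (b, K)))"

end

theory Submission
  imports Defs
begin

text \<open>An SE objective o gives equal scores to two DAGs that differ by the reversal of a covered
  edge. This makes the M\<ouml>bius transform of o(b|-) on T - {b} independent of b, so tau_o is well
  defined, and M\<ouml>bius inversion gives \<langle>o, \<eta>\<rangle> = \<langle>tau_o, c_\<eta>\<rangle> for every \<eta>. Conversely, pulling back any
  t along the linear map \<eta> \<mapsto> c_\<eta> yields an SE objective, because c_G(S) = 1 iff some a \<in> S has
  S - {a} \<subseteq> pa(a), a property invariant under Markov equivalence. Since this map sends P_N onto
  C_N, taking images is the correspondence, and an SE face is the full preimage of its image.\<close>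

text \<open>The convention o(a|\<emptyset>) = 0 used in the definition of tau_o.\<close>
definition ext_obj :: "('a \<times> 'a set \<Rightarrow> real) \<Rightarrow> 'a \<Rightarrow> 'a set \<Rightarrow> real" where
  "ext_obj ob a L = (if L = {} then 0 else ob (a, L))"

definition obj_mobius :: "('a \<times> 'a set \<Rightarrow> real) \<Rightarrow> 'a \<Rightarrow> 'a set \<Rightarrow> real" where
  "obj_mobius ob a K = (\<Sum>L\<in>Pow K. (-1::real) ^ (card K - card L) * ext_obj ob a L)"

lemma sum_obj_mobius:
  assumes "finite B"
  shows "(\<Sum>K\<in>Pow B. obj_mobius ob a K) = ext_obj ob a B"
proof -
  define g where "g S = (\<Sum>T\<in>Pow S. (-1::real) ^ card T * ext_obj ob a T)" for S
  have inv: "ext_obj ob a B = (\<Sum>T\<in>Pow B. (-1) ^ card T * g T)"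
    by (rule inclusion_exclusion_symmetric) (auto simp: g_def assms)
  have "obj_mobius ob a K = (-1) ^ card K * g K" if "K \<in> Pow B" for K
  proof -
    have fK: "finite K" using that assms finite_subset by auto
    have "(-1) ^ card K * g K = (\<Sum>L\<in>Pow K. (-1::real) ^ (card K + card L) * ext_obj ob a L)"
      by (simp add: g_def sum_distrib_left power_add mult.assoc)
    also have "\<dots> = obj_mobius ob a K" unfolding obj_mobius_def
      by (rule sum.cong) (auto simp: fK card_mono neg_one_power_add_eq_neg_one_power_diff)
    finally show ?thesis by simp
  qed
  then show ?thesis using inv by simp
qed

lemma obj_mobius_insert:
  assumes "finite R" "b \<notin> R"
  shows "obj_mobius ob a (insert b R) =
    (\<Sum>L\<in>Pow R. (-1) ^ (card R - card L) * (ext_obj ob a (insert b L) - ext_obj ob a L))"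
proof -
  have inj: "inj_on (insert b) (Pow R)" using assms(2) by (auto simp: inj_on_def)
  have card_ins: "card (insert b L) = Suc (card L)" if "L \<in> Pow R" for L
    using that assms finite_subset by (auto intro!: card_insert_disjoint)
  have "obj_mobius ob a (insert b R)
      = (\<Sum>L\<in>Pow R. (-1::real) ^ (Suc (card R) - card L) * ext_obj ob a L)
      + (\<Sum>L\<in>insert b ` Pow R. (-1::real) ^ (Suc (card R) - card L) * ext_obj ob a L)"
    unfolding obj_mobius_def Pow_insert card_insert_disjoint[OF assms]
    by (rule sum.union_disjoint) (use assms in auto)
  also have "(\<Sum>L\<in>insert b ` Pow R. (-1::real) ^ (Suc (card R) - card L) * ext_obj ob a L)
     = (\<Sum>L\<in>Pow R. (-1::real) ^ (card R - card L) * ext_obj ob a (insert b L))"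
    by (subst sum.reindex[OF inj]) (auto simp: card_ins intro!: sum.cong)
  also have "(\<Sum>L\<in>Pow R. (-1::real) ^ (Suc (card R) - card L) * ext_obj ob a L)
     = (\<Sum>L\<in>Pow R. - ((-1::real) ^ (card R - card L) * ext_obj ob a L))"
    by (rule sum.cong) (use assms in \<open>auto simp: card_mono Suc_diff_le\<close>)
  finally show ?thesis by (simp add: sum_negf sum_subtractf[symmetric] algebra_simps)
qed

lemma tau_eq_obj_mobius:
  assumes "finite T"
  shows "tau ob T = obj_mobius ob (SOME b. b \<in> T) (T - {SOME b. b \<in> T})"
  unfolding tau_def Let_def obj_mobius_def
  by (rule sum.mono_neutral_cong_left) (auto simp: assms ext_obj_def)

lemma acyclic_if_rank_increasing:
  assumes "\<And>x y. (x, y) \<in> G \<Longrightarrow> (r x :: nat) < r y"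
  shows "acyclic G"
proof -
  have "(x, y) \<in> G\<^sup>+ \<Longrightarrow> r x < r y" for x y
    by (induction rule: trancl_induct) (auto dest: assms)
  then show ?thesis unfolding acyclic_def by blast
qed

lemma pa_subset_if_DAG: "G \<in> DAGs N \<Longrightarrow> pa G a \<subseteq> N - {a}"
  unfolding DAGs_def pa_def acyclic_def by auto

lemma finite_DAGs: "finite N \<Longrightarrow> finite (DAGs N)"
  unfolding DAGs_def by (rule finite_subset[of _ "Pow (N \<times> N)"]) auto

lemma Ups_eq_Sigma: "Ups N = Sigma N (\<lambda>a. {B. B \<noteq> {} \<and> B \<subseteq> N - {a}})"
  unfolding Ups_def by auto

lemma ipU_eta:
  assumes "finite N" "G \<in> DAGs N"
  shows "ipU N ob (eta N G) = (\<Sum>x\<in>N. ext_obj ob x (pa G x))"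
proof -
  have fin: "finite {B. B \<noteq> {} \<and> B \<subseteq> N - {x}}" for x
    using assms by (auto intro: finite_subset[of _ "Pow N"])
  have "ipU N ob (eta N G) = (\<Sum>x\<in>N. \<Sum>B\<in>{B. B \<noteq> {} \<and> B \<subseteq> N - {x}}. ob (x, B) * eta N G (x, B))"
    unfolding ipU_def Ups_eq_Sigma by (subst sum.Sigma) (auto simp: assms fin split_def)
  also have "\<dots> = (\<Sum>x\<in>N. ext_obj ob x (pa G x))"
    using pa_subset_if_DAG[OF assms(2)]
    by (intro sum.cong refl)
       (simp add: eta_def Ups_def ext_obj_def if_distrib[of "(*) _"] sum.delta[OF fin] cong: if_cong)
  finally show ?thesis .
qed

text \<open>The edge a \<rightarrow> b is covered in the DAG C \<rightarrow> a, C \<rightarrow> b, a \<rightarrow> b, so reversing it preserves Markov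
  equivalence.\<close>
lemma SE_objective_covered_edge_reversal:
  assumes fin: "finite N" and se: "SE_objective N ob" and a: "a \<in> N" and b: "b \<in> N" and "a \<noteq> b"
    and C: "C \<subseteq> N - {a, b}"
  shows "ext_obj ob a C + ext_obj ob b (insert a C) = ext_obj ob a (insert b C) + ext_obj ob b C"
proof -
  define G where "G = C \<times> {a} \<union> C \<times> {b} \<union> {(a, b)}"
  define H where "H = C \<times> {a} \<union> C \<times> {b} \<union> {(b, a)}"
  have "a \<notin> C" "b \<notin> C" using C by auto
  have "acyclic G"
    by (rule acyclic_if_rank_increasing[where r = "\<lambda>x. if x = a then 1 else if x = b then 2 else 0"])
       (use \<open>a \<notin> C\<close> \<open>b \<notin> C\<close> \<open>a \<noteq> b\<close> in \<open>auto simp: G_def\<close>)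
  moreover have "acyclic H"
    by (rule acyclic_if_rank_increasing[where r = "\<lambda>x. if x = b then 1 else if x = a then 2 else 0"])
       (use \<open>a \<notin> C\<close> \<open>b \<notin> C\<close> \<open>a \<noteq> b\<close> in \<open>auto simp: H_def\<close>)
  moreover have "G \<subseteq> N \<times> N" "H \<subseteq> N \<times> N" using C a b by (auto simp: G_def H_def)
  ultimately have "G \<in> DAGs N" "H \<in> DAGs N" by (simp_all add: DAGs_def)
  moreover have "markov_equiv G H"
  proof -
    have "adj G x y = adj H x y" for x y by (auto simp: adj_def G_def H_def)
    moreover have "immorality G x c y = immorality H x c y" for x c y
      using \<open>a \<notin> C\<close> \<open>b \<notin> C\<close> \<open>a \<noteq> b\<close> by (auto simp: immorality_def adj_def G_def H_def)
    ultimately show ?thesis by (simp add: markov_equiv_def)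
  qed
  ultimately have eq: "ipU N ob (eta N G) = ipU N ob (eta N H)"
    using se unfolding SE_objective_def by blast
  have paG: "pa G x = (if x = a then C else if x = b then insert a C else {})" for x
    using \<open>a \<notin> C\<close> \<open>b \<notin> C\<close> \<open>a \<noteq> b\<close> by (auto simp: pa_def G_def)
  have paH: "pa H x = (if x = a then insert b C else if x = b then C else {})" for x
    using \<open>a \<notin> C\<close> \<open>b \<notin> C\<close> \<open>a \<noteq> b\<close> by (auto simp: pa_def H_def)
  have sum_ab: "(\<Sum>x\<in>N. h x) = h a + h b" if "\<And>x. x \<notin> {a, b} \<Longrightarrow> h x = 0" for h :: "'a \<Rightarrow> real"
  proof -
    have "(\<Sum>x\<in>N. h x) = (\<Sum>x\<in>{a, b}. h x)"
      by (rule sum.mono_neutral_cong_right) (use fin a b that in auto)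
    then show ?thesis using \<open>a \<noteq> b\<close> by simp
  qed
  have "ipU N ob (eta N G) = ext_obj ob a C + ext_obj ob b (insert a C)"
    unfolding ipU_eta[OF fin \<open>G \<in> DAGs N\<close>]
    by (subst sum_ab) (use \<open>a \<noteq> b\<close> in \<open>auto simp: paG ext_obj_def\<close>)
  moreover have "ipU N ob (eta N H) = ext_obj ob a (insert b C) + ext_obj ob b C"
    unfolding ipU_eta[OF fin \<open>H \<in> DAGs N\<close>]
    by (subst sum_ab) (use \<open>a \<noteq> b\<close> in \<open>auto simp: paH ext_obj_def\<close>)
  ultimately show ?thesis using eq by simp
qed

lemma obj_mobius_independent:
  assumes fin: "finite N" and se: "SE_objective N ob" and T: "T \<subseteq> N" and a: "a \<in> T" and b: "b \<in> T"
  shows "obj_mobius ob a (T - {a}) = obj_mobius ob b (T - {b})"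
proof (cases "a = b")
  case False
  define R where "R = T - {a, b}"
  have "finite R" using fin T finite_subset R_def by blast
  have Ta: "T - {a} = insert b R" and Tb: "T - {b} = insert a R" using a b False by (auto simp: R_def)
  have "ext_obj ob a (insert b L) - ext_obj ob a L = ext_obj ob b (insert a L) - ext_obj ob b L"
    if "L \<in> Pow R" for L
  proof -
    have "L \<subseteq> N - {a, b}" using that T by (auto simp: R_def)
    then have "ext_obj ob a L + ext_obj ob b (insert a L) = ext_obj ob a (insert b L) + ext_obj ob b L"
      using SE_objective_covered_edge_reversal[OF fin se _ _ False] a b T by blast
    then show ?thesis by simp
  qed
  moreover have "b \<notin> R" "a \<notin> R" by (auto simp: R_def)
  ultimately show ?thesis
    unfolding Ta Tb obj_mobius_insert[OF \<open>finite R\<close> \<open>b \<notin> R\<close>] obj_mobius_insert[OF \<open>finite R\<close> \<open>a \<notin> R\<close>]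
    by (intro sum.cong) auto
qed simp

lemma Ssets_minus_nonempty: "S \<in> Ssets N \<Longrightarrow> S - {a} \<noteq> {}"
proof
  assume "S \<in> Ssets N" "S - {a} = {}"
  then have "card S \<le> card {a}" by (intro card_mono) auto
  with \<open>S \<in> Ssets N\<close> show False by (simp add: Ssets_def)
qed

lemma finite_Ssets: "finite N \<Longrightarrow> finite (Ssets N)"
  unfolding Ssets_def by (rule finite_subset[of _ "Pow N"]) auto

lemma c_eta_eq_sum_Ups:
  assumes fin: "finite N" and S: "S \<in> Ssets N"
  shows "c_eta N v S = (\<Sum>p\<in>Ups N. if fst p \<in> S \<and> S - {fst p} \<subseteq> snd p then v p else 0)"
proof -
  define f where "f p = (if fst p \<in> S \<and> S - {fst p} \<subseteq> snd p then v p else 0)" for p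
  have finB: "finite {B. B \<subseteq> N - {a} \<and> P B}" for a P
    using fin by (auto intro: finite_subset[of _ "Pow N"])
  have "(\<Sum>p\<in>Ups N. f p) = (\<Sum>a\<in>N. \<Sum>B\<in>{B. B \<noteq> {} \<and> B \<subseteq> N - {a}}. f (a, B))"
    unfolding Ups_eq_Sigma by (subst sum.Sigma) (auto simp: fin finB[simplified conj_commute] split_def)
  also have "\<dots> = (\<Sum>a\<in>N. if a \<in> S then (\<Sum>B\<in>{B. S - {a} \<subseteq> B \<and> B \<subseteq> N - {a}}. v (a, B)) else 0)"
    using Ssets_minus_nonempty[OF S]
    by (intro sum.cong refl) (auto simp: f_def sum.inter_filter[symmetric] finB[simplified conj_commute]
        intro!: sum.cong)
  also have "\<dots> = c_eta N v S"
    using S fin by (simp add: c_eta_def sum.inter_filter[symmetric] Ssets_def Int_absorb1 flip: Int_def)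
  finally show ?thesis unfolding f_def ..
qed

text \<open>The adjoint of the linear map \<eta> \<mapsto> c_\<eta>.\<close>
definition lift_objective :: "'a set \<Rightarrow> ('a set \<Rightarrow> real) \<Rightarrow> 'a \<times> 'a set \<Rightarrow> real" where
  "lift_objective N t p = (\<Sum>S\<in>Ssets N. if fst p \<in> S \<and> S - {fst p} \<subseteq> snd p then t S else 0)"

lemma ipS_c_eta:
  assumes "finite N"
  shows "ipS N t (c_eta N v) = ipU N (lift_objective N t) v"
proof -
  have "ipS N t (c_eta N v)
      = (\<Sum>S\<in>Ssets N. \<Sum>p\<in>Ups N. if fst p \<in> S \<and> S - {fst p} \<subseteq> snd p then t S * v p else 0)"
    unfolding ipS_def using c_eta_eq_sum_Ups[OF assms]
    by (auto simp: sum_distrib_left if_distrib intro!: sum.cong)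
  also have "\<dots> = ipU N (lift_objective N t) v"
    unfolding ipU_def lift_objective_def
    by (subst sum.swap) (auto simp: sum_distrib_right if_distrib intro!: sum.cong)
  finally show ?thesis .
qed

lemma lift_objective_tau:
  assumes fin: "finite N" and se: "SE_objective N ob" and p: "p \<in> Ups N"
  shows "lift_objective N (tau ob) p = ob p"
proof -
  obtain a B where p_eq: "p = (a, B)" and a: "a \<in> N" and "B \<noteq> {}" and BN: "B \<subseteq> N - {a}"
    using p by (auto simp: Ups_def)
  have "finite B" using BN fin finite_subset by blast
  have tau_S: "tau ob S = obj_mobius ob a (S - {a})" if "S \<in> Ssets N" "a \<in> S" for S
  proof -
    have "S \<subseteq> N" using that by (simp add: Ssets_def)
    moreover have "(SOME b. b \<in> S) \<in> S" using \<open>a \<in> S\<close> by (rule someI)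
    ultimately show ?thesis
      using tau_eq_obj_mobius[of S] obj_mobius_independent[OF fin se, of S] that fin
      by (metis finite_subset)
  qed
  have "lift_objective N (tau ob) p = (\<Sum>S\<in>{S\<in>Ssets N. a \<in> S \<and> S - {a} \<subseteq> B}. obj_mobius ob a (S - {a}))"
    unfolding lift_objective_def p_eq fst_conv snd_conv
    by (subst sum.inter_filter[OF finite_Ssets[OF fin]]) (auto intro!: sum.cong simp: tau_S)
  also have "\<dots> = (\<Sum>K\<in>{K. K \<noteq> {} \<and> K \<subseteq> B}. obj_mobius ob a K)"
  proof (rule sum.reindex_bij_witness[where i = "insert a" and j = "\<lambda>S. S - {a}"])
    fix K assume K: "K \<in> {K. K \<noteq> {} \<and> K \<subseteq> B}"
    then have "a \<notin> K" "finite K" using BN \<open>finite B\<close> finite_subset by auto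
    then have "card (insert a K) \<ge> 2" using K by (simp add: Suc_leI card_gt_0_iff)
    then show "insert a K \<in> {S\<in>Ssets N. a \<in> S \<and> S - {a} \<subseteq> B}"
      using K BN a by (auto simp: Ssets_def)
    show "insert a K - {a} = K" using \<open>a \<notin> K\<close> by auto
  qed (auto dest: Ssets_minus_nonempty)
  also have "\<dots> = (\<Sum>K\<in>Pow B. obj_mobius ob a K)"
    by (rule sum.mono_neutral_left) (auto simp: \<open>finite B\<close> obj_mobius_def ext_obj_def)
  also have "\<dots> = ob p" using sum_obj_mobius[OF \<open>finite B\<close>] \<open>B \<noteq> {}\<close> by (simp add: ext_obj_def p_eq)
  finally show ?thesis .
qed

lemma ipU_eq_ipS_tau:
  assumes "finite N" and "SE_objective N ob"
  shows "ipU N ob v = ipS N (tau ob) (c_eta N v)"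
  unfolding ipS_c_eta[OF assms(1)] ipU_def by (auto simp: lift_objective_tau[OF assms] intro!: sum.cong)

lemma DAG_no_2cycle: "G \<in> DAGs N \<Longrightarrow> (x, y) \<in> G \<Longrightarrow> (y, x) \<in> G \<Longrightarrow> False"
  unfolding DAGs_def acyclic_def by (blast intro: trancl_into_trancl)

lemma DAG_no_3cycle: "G \<in> DAGs N \<Longrightarrow> (x, y) \<in> G \<Longrightarrow> (y, z) \<in> G \<Longrightarrow> (z, x) \<in> G \<Longrightarrow> False"
  unfolding DAGs_def acyclic_def by (blast intro: trancl_into_trancl)

lemma acyclic_ex_sink:
  assumes "finite G" "acyclic G" "D \<noteq> {}"
  obtains s where "s \<in> D" "\<And>y. (s, y) \<in> G \<Longrightarrow> y \<notin> D"
proof -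
  have "wf (G\<inverse>)" by (rule finite_acyclic_wf_converse[OF assms(1,2)])
  then show ?thesis using assms(3) that unfolding wf_eq_minimal by (metis converse_iff equals0I)
qed

lemma covering_vertex_unique:
  assumes "G \<in> DAGs N" "a \<in> S" "b \<in> S" "S - {a} \<subseteq> pa G a" "S - {b} \<subseteq> pa G b"
  shows "a = b"
  using assms DAG_no_2cycle[of G N a b] by (auto simp: pa_def)

lemma cG_eq_indicator:
  assumes fin: "finite N" and G: "G \<in> DAGs N" and S: "S \<in> Ssets N"
  shows "cG N G S = (if \<exists>a\<in>S. S - {a} \<subseteq> pa G a then 1 else 0)"
proof -
  have "finite S" using S fin finite_subset by (auto simp: Ssets_def)
  have inner: "(\<Sum>B\<in>{B. S - {a} \<subseteq> B \<and> B \<subseteq> N - {a}}. eta N G (a, B)) = (if S - {a} \<subseteq> pa G a then 1 else 0)"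
    if "a \<in> S" for a
  proof -
    have finB: "finite {B. S - {a} \<subseteq> B \<and> B \<subseteq> N - {a}}" using fin by (auto intro: finite_subset[of _ "Pow N"])
    have "(\<Sum>B\<in>{B. S - {a} \<subseteq> B \<and> B \<subseteq> N - {a}}. eta N G (a, B))
        = (\<Sum>B\<in>{B. S - {a} \<subseteq> B \<and> B \<subseteq> N - {a}}. if B = pa G a then 1 else 0)"
      using \<open>a \<in> S\<close> S Ssets_minus_nonempty[OF S, of a]
      by (intro sum.cong refl) (auto simp: eta_def Ups_def Ssets_def)
    then show ?thesis using pa_subset_if_DAG[OF G, of a] by (simp add: sum.delta[OF finB])
  qed
  have "cG N G S = (\<Sum>a\<in>S. if S - {a} \<subseteq> pa G a then 1 else 0)"
    unfolding cG_def c_eta_def using S inner by simp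
  also have "\<dots> = (if \<exists>a\<in>S. S - {a} \<subseteq> pa G a then 1 else 0)"
  proof (cases "\<exists>a\<in>S. S - {a} \<subseteq> pa G a")
    case True
    then obtain a0 where "a0 \<in> S" "S - {a0} \<subseteq> pa G a0" by blast
    then have "(\<Sum>a\<in>S. if S - {a} \<subseteq> pa G a then 1 else 0) = (\<Sum>a\<in>S. if a = a0 then 1 else (0::real))"
      using covering_vertex_unique[OF G] by (intro sum.cong) auto
    then show ?thesis using True \<open>a0 \<in> S\<close> \<open>finite S\<close> by simp
  qed simp
  finally show ?thesis .
qed

lemma markov_equiv_adj_within_cover:
  assumes H: "H \<in> DAGs N" and me: "markov_equiv G H" and cover: "S - {a} \<subseteq> pa G a"
    and x: "x \<in> S - {a}" and y: "y \<in> S - {a}" and "x \<noteq> y" and "(a, x) \<in> H"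
  shows "adj H x y"
proof (rule ccontr)
  assume "\<not> adj H x y"
  then have "\<not> adj G x y" using me by (simp add: markov_equiv_def)
  then have "immorality G x a y"
    using cover x y \<open>x \<noteq> y\<close> by (auto simp: immorality_def pa_def)
  then have "immorality H x a y" using me by (metis markov_equiv_def)
  then have "(x, a) \<in> H" by (simp add: immorality_def)
  with \<open>(a, x) \<in> H\<close> show False using DAG_no_2cycle[OF H] by blast
qed

text \<open>If a covers S in G, some vertex covers S in H: either a itself, or the H-sink s among
  the children of a in S; the children are adjacent to all of S, since otherwise an
  immorality at a in G would be lost in H.\<close>
lemma markov_equiv_ex_covering_vertex:
  assumes fin: "finite N" and G: "G \<in> DAGs N" and H: "H \<in> DAGs N" and me: "markov_equiv G H"
    and a: "a \<in> S" and cover: "S - {a} \<subseteq> pa G a"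
  shows "\<exists>s\<in>S. S - {s} \<subseteq> pa H s"
proof -
  define D where "D = {x\<in>S - {a}. (a, x) \<in> H}"
  have adj_a: "adj H x a" if "x \<in> S - {a}" for x
    using that cover me by (auto simp: markov_equiv_def adj_def pa_def)
  show ?thesis
  proof (cases "D = {}")
    case True
    then have "S - {a} \<subseteq> pa H a" using adj_a by (auto simp: D_def adj_def pa_def)
    then show ?thesis using a by blast
  next
    case False
    have "finite H" using H fin unfolding DAGs_def by (auto intro: finite_subset[of _ "N \<times> N"])
    moreover have "acyclic H" using H by (simp add: DAGs_def)
    ultimately obtain s where s: "s \<in> D" and sink: "\<And>y. (s, y) \<in> H \<Longrightarrow> y \<notin> D"
      using False by (rule acyclic_ex_sink) blast
    have "y \<in> pa H s" if y: "y \<in> S - {s}" for y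
    proof (cases "y = a")
      case False
      then have "adj H s y"
        using s y markov_equiv_adj_within_cover[OF H me cover] by (auto simp: D_def)
      moreover have "(s, y) \<notin> H"
      proof
        assume "(s, y) \<in> H"
        then have "y \<notin> D" by (rule sink)
        then have "(y, a) \<in> H" using adj_a[of y] y False by (auto simp: D_def adj_def)
        with \<open>(s, y) \<in> H\<close> s show False using DAG_no_3cycle[OF H] by (auto simp: D_def)
      qed
      ultimately show ?thesis by (simp add: adj_def pa_def)
    qed (use s in \<open>simp add: D_def pa_def\<close>)
    then show ?thesis using s by (auto simp: D_def)
  qed
qed

lemma cG_markov_equiv:
  assumes fin: "finite N" and G: "G \<in> DAGs N" and H: "H \<in> DAGs N" and me: "markov_equiv G H"
  shows "cG N G = cG N H"
proof
  fix S
  have "markov_equiv H G" using me by (simp add: markov_equiv_def)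
  then have "(\<exists>a\<in>S. S - {a} \<subseteq> pa G a) \<longleftrightarrow> (\<exists>a\<in>S. S - {a} \<subseteq> pa H a)"
    using markov_equiv_ex_covering_vertex[OF fin G H me] markov_equiv_ex_covering_vertex[OF fin H G]
    by blast
  then show "cG N G S = cG N H S"
    using cG_eq_indicator[OF fin G] cG_eq_indicator[OF fin H] by (cases "S \<in> Ssets N") (auto simp: cG_def c_eta_def)
qed

lemma SE_objective_lift_objective:
  assumes "finite N"
  shows "SE_objective N (lift_objective N t)"
  unfolding SE_objective_def ipS_c_eta[OF assms, symmetric] cG_def[symmetric]
  using cG_markov_equiv[OF assms] by simp

lemma vertex_in_conv:
  assumes "finite V" "v \<in> V"
  shows "v \<in> conv V"
proof -
  let ?w = "\<lambda>x. if x = v then 1 else 0 :: real"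
  have "(\<lambda>i. \<Sum>x\<in>V. ?w x * x i) = v" "(\<Sum>x\<in>V. ?w x) = 1"
    using assms by (simp_all add: if_distrib[of "\<lambda>r. r * _"] cong: if_cong)
  then show ?thesis unfolding conv_def by (intro CollectI exI[of _ ?w]) auto
qed

lemma conv_image_subset:
  fixes F :: "('i \<Rightarrow> real) \<Rightarrow> ('j \<Rightarrow> real)"
  assumes finV: "finite V" and lin: "\<And>w. F (\<lambda>i. \<Sum>v\<in>V. w v * v i) = (\<lambda>j. \<Sum>v\<in>V. w v * F v j)"
  shows "F ` conv V \<subseteq> conv (F ` V)"
proof
  fix y assume "y \<in> F ` conv V"
  then obtain w where w0: "\<forall>v\<in>V. w v \<ge> 0" and w1: "(\<Sum>v\<in>V. w v) = 1"
    and y: "y = F (\<lambda>i. \<Sum>v\<in>V. w v * v i)" by (auto simp: conv_def)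
  define w' where "w' c = (\<Sum>v\<in>{v\<in>V. F v = c}. w v)" for c
  have "\<forall>c\<in>F ` V. w' c \<ge> 0" using w0 by (auto simp: w'_def intro: sum_nonneg)
  moreover have "(\<Sum>c\<in>F ` V. w' c) = 1"
    using w1 sum.image_gen[OF finV, of w F] by (simp add: w'_def)
  moreover have "y j = (\<Sum>c\<in>F ` V. w' c * c j)" for j
  proof -
    have "y j = (\<Sum>v\<in>V. w v * F v j)" using y lin by simp
    also have "\<dots> = (\<Sum>c\<in>F ` V. \<Sum>v\<in>{v\<in>V. F v = c}. w v * F v j)"
      by (rule sum.image_gen[OF finV])
    finally show ?thesis unfolding w'_def sum_distrib_right by (auto intro!: sum.cong)
  qed
  ultimately show "y \<in> conv (F ` V)" unfolding conv_def by blast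
qed

lemma conv_image_supset:
  fixes F :: "('i \<Rightarrow> real) \<Rightarrow> ('j \<Rightarrow> real)"
  assumes finV: "finite V" and lin: "\<And>w. F (\<lambda>i. \<Sum>v\<in>V. w v * v i) = (\<lambda>j. \<Sum>v\<in>V. w v * F v j)"
  shows "conv (F ` V) \<subseteq> F ` conv V"
proof
  fix y assume "y \<in> conv (F ` V)"
  then obtain w' where w0: "\<forall>c\<in>F ` V. w' c \<ge> 0" and w1: "(\<Sum>c\<in>F ` V. w' c) = 1"
    and y: "y = (\<lambda>j. \<Sum>c\<in>F ` V. w' c * c j)" by (auto simp: conv_def)
  define r where "r c = inv_into V F c" for c
  define w where "w v = (if v = r (F v) then w' (F v) else 0)" for v
  have r: "r c \<in> V" "F (r c) = c" if "c \<in> F ` V" for c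
    using that by (auto simp: r_def inv_into_into f_inv_into_f)
  \<comment> \<open>all the weight of a fibre of F is put on its representative r c\<close>
  have weighted_sum: "(\<Sum>v\<in>V. w v * g v) = (\<Sum>c\<in>F ` V. w' c * g (r c))" for g :: "_ \<Rightarrow> real"
  proof -
    have "(\<Sum>v\<in>{v\<in>V. F v = c}. w v * g v) = w' c * g (r c)" if "c \<in> F ` V" for c
    proof -
      have "(\<Sum>v\<in>{v\<in>V. F v = c}. w v * g v) = (\<Sum>v\<in>{v\<in>V. F v = c}. if v = r c then w' c * g v else 0)"
        by (rule sum.cong) (auto simp: w_def)
      then show ?thesis using r[OF that] finV by simp
    qed
    then show ?thesis by (simp add: sum.image_gen[OF finV, of "\<lambda>v. w v * g v" F])
  qed
  have "\<forall>v\<in>V. w v \<ge> 0" using w0 by (auto simp: w_def)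
  moreover have "(\<Sum>v\<in>V. w v) = 1" using weighted_sum[of "\<lambda>_. 1"] w1 by simp
  moreover have "y = F (\<lambda>i. \<Sum>v\<in>V. w v * v i)"
    unfolding lin y using weighted_sum r by (auto intro!: sum.cong)
  ultimately show "y \<in> F ` conv V" unfolding conv_def by blast
qed

lemma c_eta_linear: "c_eta N (\<lambda>i. \<Sum>v\<in>V. w v * v i) = (\<lambda>S. \<Sum>v\<in>V. w v * c_eta N v S)"
proof
  fix S
  show "c_eta N (\<lambda>i. \<Sum>v\<in>V. w v * v i) S = (\<Sum>v\<in>V. w v * c_eta N v S)"
    by (simp add: c_eta_def sum_distrib_left sum.swap[of _ V])
qed

lemma C_poly_eq_image_P_poly:
  assumes "finite N"
  shows "C_poly N = c_eta N ` P_poly N"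
proof -
  have "C_poly N = conv (c_eta N ` eta N ` DAGs N)" by (simp add: C_poly_def cG_def image_image)
  also have "\<dots> = c_eta N ` conv (eta N ` DAGs N)"
    using finite_DAGs[OF assms] c_eta_linear[of N]
    by (intro equalityI conv_image_subset conv_image_supset) simp_all
  finally show ?thesis unfolding P_poly_def .
qed

lemma face_C_eq_image_face_P:
  assumes fin: "finite N" and ob_t: "\<And>v. ipU N ob v = ipS N t (c_eta N v)"
  shows "face_C N t u = c_eta N ` face_P N ob u" and "valid_C N t u \<longleftrightarrow> valid_P N ob u"
  unfolding face_P_def face_C_def valid_P_def valid_C_def C_poly_eq_image_P_poly[OF fin]
  using ob_t by auto

lemma SE_face_subset_iff_image_subset:
  assumes fin: "finite N" and F1: "F1 \<subseteq> P_poly N" and F2: "SE_face N F2"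
  shows "F1 \<subseteq> F2 \<longleftrightarrow> c_eta N ` F1 \<subseteq> c_eta N ` F2"
proof
  assume sub: "c_eta N ` F1 \<subseteq> c_eta N ` F2"
  obtain ob u where se: "SE_objective N ob" and F2_eq: "F2 = face_P N ob u"
    using F2 by (auto simp: SE_face_def)
  show "F1 \<subseteq> F2"
  proof
    fix v assume "v \<in> F1"
    then obtain w where "w \<in> F2" "c_eta N v = c_eta N w" using sub by blast
    then have "ipU N ob v = u"
      using ipU_eq_ipS_tau[OF fin se] by (simp add: F2_eq face_P_def)
    then show "v \<in> F2" using F1 \<open>v \<in> F1\<close> by (auto simp: F2_eq face_P_def)
  qed
qed blast

lemma DAG_in_face_P_iff:
  assumes fin: "finite N" and se: "SE_objective N ob" and G: "G \<in> DAGs N"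
  shows "eta N G \<in> face_P N ob u \<longleftrightarrow> cG N G \<in> face_C N (tau ob) u"
proof -
  have "eta N G \<in> P_poly N" "cG N G \<in> C_poly N"
    unfolding P_poly_def C_poly_def using G fin by (auto intro: vertex_in_conv finite_DAGs)
  then show ?thesis
    using ipU_eq_ipS_tau[OF fin se, of "eta N G"] by (simp add: face_P_def face_C_def cG_def)
qed

lemma faces_C_eq_image_SE_faces:
  assumes fin: "finite N"
  shows "{F. is_face_C N F} = (\<lambda>F. c_eta N ` F) ` {F. SE_face N F}"
proof (intro equalityI subsetI)
  fix F assume "F \<in> {F. is_face_C N F}"
  then obtain t u where "valid_C N t u" and F: "F = face_C N t u" by (auto simp: is_face_C_def)
  note face = face_C_eq_image_face_P[OF fin ipS_c_eta[OF fin, symmetric]]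
  have "SE_face N (face_P N (lift_objective N t) u)"
    unfolding SE_face_def using SE_objective_lift_objective[OF fin] face(2) \<open>valid_C N t u\<close> by blast
  moreover have "F = c_eta N ` face_P N (lift_objective N t) u" using face(1) F by simp
  ultimately show "F \<in> (\<lambda>F. c_eta N ` F) ` {F. SE_face N F}" by blast
next
  fix F assume "F \<in> (\<lambda>F. c_eta N ` F) ` {F. SE_face N F}"
  then obtain ob u where se: "SE_objective N ob" and "valid_P N ob u" and F: "F = c_eta N ` face_P N ob u"
    by (auto simp: SE_face_def)
  note face = face_C_eq_image_face_P[OF fin ipU_eq_ipS_tau[OF fin se]]
  then have "valid_C N (tau ob) u" "F = face_C N (tau ob) u" using \<open>valid_P N ob u\<close> F by simp_all
  then show "F \<in> {F. is_face_C N F}" by (auto simp: is_face_C_def)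
qed

theorem corollary5:
  fixes N :: "'a set"
  assumes "finite N" and "card N \<ge> 2"
  shows "\<exists>\<Phi>. bij_betw \<Phi> {F. SE_face N F} {F. is_face_C N F}
    \<and> (\<forall>F1 F2. SE_face N F1 \<longrightarrow> SE_face N F2 \<longrightarrow> (F1 \<subseteq> F2 \<longleftrightarrow> \<Phi> F1 \<subseteq> \<Phi> F2))
    \<and> (\<forall>ob u. SE_objective N ob \<and> valid_P N ob u \<longrightarrow>
          valid_C N (tau ob) u
        \<and> \<Phi> (face_P N ob u) = face_C N (tau ob) u
        \<and> {G\<in>DAGs N. eta N G \<in> face_P N ob u} = {G\<in>DAGs N. cG N G \<in> \<Phi> (face_P N ob u)})"
proof (intro exI conjI allI impI)
  note fin = assms(1)
  let ?\<Phi> = "\<lambda>F. c_eta N ` F"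
  have SE_face_sub: "F \<subseteq> P_poly N" if "SE_face N F" for F
    using that by (auto simp: SE_face_def face_P_def)
  show mono: "F1 \<subseteq> F2 \<longleftrightarrow> ?\<Phi> F1 \<subseteq> ?\<Phi> F2" if "SE_face N F1" "SE_face N F2" for F1 F2
    using SE_face_subset_iff_image_subset[OF fin SE_face_sub] that by blast
  have "inj_on ?\<Phi> {F. SE_face N F}"
    by (rule inj_onI) (use mono in blast)
  then show "bij_betw ?\<Phi> {F. SE_face N F} {F. is_face_C N F}"
    unfolding bij_betw_def faces_C_eq_image_SE_faces[OF fin] by simp
  fix ob u assume "SE_objective N ob \<and> valid_P N ob u"
  then have se: "SE_objective N ob" and "valid_P N ob u" by simp_all
  note face = face_C_eq_image_face_P[OF fin ipU_eq_ipS_tau[OF fin se]]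
  show "valid_C N (tau ob) u" using face(2) \<open>valid_P N ob u\<close> by simp
  show "?\<Phi> (face_P N ob u) = face_C N (tau ob) u" using face(1) by simp
  show "{G\<in>DAGs N. eta N G \<in> face_P N ob u} = {G\<in>DAGs N. cG N G \<in> ?\<Phi> (face_P N ob u)}"
    using DAG_in_face_P_iff[OF fin se] face(1) by auto
qed

end
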